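(* For $i=1,\dots,n$ let $\mathbf a_i=(a_{i,1},\dots,a_{i,r_i})\in\mathbb{F}^{r_i}$ be a $(\sigma,\delta)$-multiplicity sequence, and assume $a_{1,1},\dots,a_{n,1}$ are distinct. Let $a_1,\dots,a_\ell\in\mathbb{F}$ be pairwise non-conjugate, $n_i\in\mathbb{Z}_+$ and $\beta_{i,1},\dots,\beta_{i,n_i}\in\mathbb{F}^*$ be such that $n=n_1+\dots+n_\ell$ and $\{a_{1,1},\dots,a_{n,1}\}=\bigcup_{i=1}^\ell\{a_i^{\beta_{i,1}},\dots,a_i^{\beta_{i,n_i}}\}$. The following are equivalent: (1) $\Omega=\{P_{\mathbf a_1},\dots,P_{\mathbf a_n}\}$ is P-independent; (2) $\Psi=\{a_{1,1},\dots,a_{n,1}\}\subseteq\mathbb{F}$ is P-independent; (3) for each $i=1,\dots,\ell$, the elements $\beta_{i,1},\dots,\beta_{i,n_i}$ are linearly independent over $K^{\sigma,\delta}_{a_i}$ with $\mathbb{F}$ regarded as a right $K^{\sigma,\delta}_{a_i}$-vector space.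
   Context: Let $\mathbb{F}$ be a division ring, $\sigma$ a ring endomorphism and $\delta$ a $\sigma$-derivation; $\mathbb{F}[x;\sigma,\delta]$ is the skew polynomial ring with $xa=\sigma(a)x+\delta(a)$ (domain with right Euclidean division). For $a\in\mathbb{F}$, $F(a)$ is the remainder of right division of $F$ by $x-a$; $a$ is a (right) zero of $F$ if $F(a)=0$. For $\mathbf a=(a_1,\dots,a_r)$, $P_{\mathbf a}=(x-a_r)\cdots(x-a_1)$; $\mathbf a$ is a $(\sigma,\delta)$-multiplicity sequence if $a_1$ is the only right zero of $P_{\mathbf a}$ in $\mathbb{F}$. Conjugation: $a^\beta=\sigma(\beta)a\beta^{-1}+\delta(\beta)\beta^{-1}$ for $\beta\in\mathbb{F}^*$; $a,b$ conjugate if $b=a^\beta$ for some $\beta$. Centralizer: $K^{\sigma,\delta}_a=\{\beta\in\mathbb{F}:\sigma(\beta)a+\delta(\beta)=a\beta\}$, a division subring. For a set $\Omega$ of skew polynomials, $I(\Omega)$ is the left ideal of skew polynomials right-divisible by every element of $\Omega$ and $F_\Omega$ its monic generator of minimal degree (or $0$); $\Omega$ is P-independent if finite, $I(\Omega)\ne\{0\}$ and $\deg F_\Omega=\sum_{P\in\Omega}\deg P$; a finite set $\{b_1,\dots,b_k\}$ of distinct elements of $\mathbb{F}$ is P-independent if $\{x-b_1,\dots,x-b_k\}$ is. *)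

theory Defs
  imports "HOL-Computational_Algebra.Polynomial"
begin

text \<open>Elements are represented by coefficient polynomials p = sum_k p_k x^k (coefficients
on the left), with the skew multiplication given by x a = sigma(a) x + delta(a).\<close>

definition is_ring_endo :: "('a::division_ring \<Rightarrow> 'a) \<Rightarrow> bool" where
  "is_ring_endo \<sigma> \<longleftrightarrow> (\<forall>x y. \<sigma> (x + y) = \<sigma> x + \<sigma> y) \<and> (\<forall>x y. \<sigma> (x * y) = \<sigma> x * \<sigma> y) \<and> \<sigma> 1 = 1"

definition is_sigma_derivation :: "('a::division_ring \<Rightarrow> 'a) \<Rightarrow> ('a \<Rightarrow> 'a) \<Rightarrow> bool" where
  "is_sigma_derivation \<sigma> \<delta> \<longleftrightarrow> (\<forall>x y. \<delta> (x + y) = \<delta> x + \<delta> y) \<and>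
     (\<forall>x y. \<delta> (x * y) = \<sigma> x * \<delta> y + \<delta> x * y)"

definition xmul :: "('a::division_ring \<Rightarrow> 'a) \<Rightarrow> ('a \<Rightarrow> 'a) \<Rightarrow> 'a poly \<Rightarrow> 'a poly" where
  "xmul \<sigma> \<delta> p = pCons 0 (map_poly \<sigma> p) + map_poly \<delta> p"

definition skew_mult :: "('a::division_ring \<Rightarrow> 'a) \<Rightarrow> ('a \<Rightarrow> 'a) \<Rightarrow> 'a poly \<Rightarrow> 'a poly \<Rightarrow> 'a poly" where
  "skew_mult \<sigma> \<delta> F G = (\<Sum>i\<le>degree F. map_poly (\<lambda>b. coeff F i * b) ((xmul \<sigma> \<delta> ^^ i) G))"

definition xminus :: "'a::division_ring \<Rightarrow> 'a poly" where
  "xminus a = [:- a, 1:]"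

definition skew_eval :: "('a::division_ring \<Rightarrow> 'a) \<Rightarrow> ('a \<Rightarrow> 'a) \<Rightarrow> 'a poly \<Rightarrow> 'a \<Rightarrow> 'a" where
  "skew_eval \<sigma> \<delta> F a = (THE r. \<exists>Q. F = skew_mult \<sigma> \<delta> Q (xminus a) + [:r:])"

text \<open>P_a = (x - a_r) ... (x - a_1) for the list as = [a_1, ..., a_r].\<close>
definition P_seq :: "('a::division_ring \<Rightarrow> 'a) \<Rightarrow> ('a \<Rightarrow> 'a) \<Rightarrow> 'a list \<Rightarrow> 'a poly" where
  "P_seq \<sigma> \<delta> as = foldl (\<lambda>P a. skew_mult \<sigma> \<delta> (xminus a) P) [:1:] as"

definition mult_seq :: "('a::division_ring \<Rightarrow> 'a) \<Rightarrow> ('a \<Rightarrow> 'a) \<Rightarrow> 'a list \<Rightarrow> bool" where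
  "mult_seq \<sigma> \<delta> as \<longleftrightarrow> as \<noteq> [] \<and> {b. skew_eval \<sigma> \<delta> (P_seq \<sigma> \<delta> as) b = 0} = {hd as}"

definition right_dvd :: "('a::division_ring \<Rightarrow> 'a) \<Rightarrow> ('a \<Rightarrow> 'a) \<Rightarrow> 'a poly \<Rightarrow> 'a poly \<Rightarrow> bool" where
  "right_dvd \<sigma> \<delta> G F \<longleftrightarrow> (\<exists>Q. F = skew_mult \<sigma> \<delta> Q G)"

definition I_ideal :: "('a::division_ring \<Rightarrow> 'a) \<Rightarrow> ('a \<Rightarrow> 'a) \<Rightarrow> 'a poly set \<Rightarrow> 'a poly set" where
  "I_ideal \<sigma> \<delta> \<Omega> = {F. \<forall>P\<in>\<Omega>. right_dvd \<sigma> \<delta> P F}"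

definition F_gen :: "('a::division_ring \<Rightarrow> 'a) \<Rightarrow> ('a \<Rightarrow> 'a) \<Rightarrow> 'a poly set \<Rightarrow> 'a poly" where
  "F_gen \<sigma> \<delta> \<Omega> = (if I_ideal \<sigma> \<delta> \<Omega> = {0} then 0 else
     (SOME F. F \<in> I_ideal \<sigma> \<delta> \<Omega> \<and> lead_coeff F = 1 \<and>
        (\<forall>G\<in>I_ideal \<sigma> \<delta> \<Omega>. G \<noteq> 0 \<longrightarrow> degree F \<le> degree G)))"

definition P_indep :: "('a::division_ring \<Rightarrow> 'a) \<Rightarrow> ('a \<Rightarrow> 'a) \<Rightarrow> 'a poly set \<Rightarrow> bool" where
  "P_indep \<sigma> \<delta> \<Omega> \<longleftrightarrow> finite \<Omega> \<and> I_ideal \<sigma> \<delta> \<Omega> \<noteq> {0} \<and>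
     degree (F_gen \<sigma> \<delta> \<Omega>) = (\<Sum>P\<in>\<Omega>. degree P)"

definition P_indep_elems :: "('a::division_ring \<Rightarrow> 'a) \<Rightarrow> ('a \<Rightarrow> 'a) \<Rightarrow> 'a set \<Rightarrow> bool" where
  "P_indep_elems \<sigma> \<delta> B \<longleftrightarrow> finite B \<and> P_indep \<sigma> \<delta> (xminus ` B)"

definition skew_conj :: "('a::division_ring \<Rightarrow> 'a) \<Rightarrow> ('a \<Rightarrow> 'a) \<Rightarrow> 'a \<Rightarrow> 'a \<Rightarrow> 'a" where
  "skew_conj \<sigma> \<delta> a \<beta> = \<sigma> \<beta> * a * inverse \<beta> + \<delta> \<beta> * inverse \<beta>"

definition skew_conjugate :: "('a::division_ring \<Rightarrow> 'a) \<Rightarrow> ('a \<Rightarrow> 'a) \<Rightarrow> 'a \<Rightarrow> 'a \<Rightarrow> bool" where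
  "skew_conjugate \<sigma> \<delta> a b \<longleftrightarrow> (\<exists>\<beta>. \<beta> \<noteq> 0 \<and> b = skew_conj \<sigma> \<delta> a \<beta>)"

definition centralizer :: "('a::division_ring \<Rightarrow> 'a) \<Rightarrow> ('a \<Rightarrow> 'a) \<Rightarrow> 'a \<Rightarrow> 'a set" where
  "centralizer \<sigma> \<delta> a = {\<beta>. \<sigma> \<beta> * a + \<delta> \<beta> = a * \<beta>}"

definition right_lin_indep :: "'a::division_ring set \<Rightarrow> (nat \<Rightarrow> 'a) \<Rightarrow> nat \<Rightarrow> bool" where
  "right_lin_indep K \<beta> m \<longleftrightarrow> (\<forall>c. (\<forall>j<m. c j \<in> K) \<longrightarrow> (\<Sum>j<m. \<beta> j * c j) = 0 \<longrightarrow> (\<forall>j<m. c j = 0))"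

end

theory Submission
  imports Defs
begin

text \<open>
  Ore's theorem deg lclm(A, B) + deg gcrd(A, B) = deg A + deg B shows that adding P
  to a P-independent set Omega keeps it P-independent iff F_Omega and P have no nonconstant
  common right divisor. If P = (x - c) P' and the only right zero of P is also a zero of P',
  such a divisor exists for P iff it exists for P' (a nontrivial gcrd with P is linear, and its
  zero is then a common zero of P and P'). Stripping the factors of each P_a_i one by one reduces Omega to
  {x - a_11, ..., x - a_n1}.

  The map beta |-> F(a^beta) beta is right K_a-linear. If F is nonzero and vanishes
  on conjugates a_i^beta_ij with each family (beta_ij)_j right K_(a_i)-independent and the a_i
  pairwise non-conjugate, dividing off one linear factor preserves these hypotheses with one
  element fewer, so deg F >= n; applied to F_Psi this gives (3) -> (2). Conversely, the
  minimal polynomial of Psi without one point does not vanish there, and evaluating it along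
  a linear relation among the beta_ij shows that all coefficients vanish.
\<close>

section \<open>Arithmetic of skew polynomials\<close>

definition lsmult :: "'a::division_ring \<Rightarrow> 'a poly \<Rightarrow> 'a poly" where
  "lsmult c p = map_poly (\<lambda>b. c * b) p"

lemma coeff_lsmult [simp]: "coeff (lsmult c p) n = c * coeff p n"
  unfolding lsmult_def by (simp add: coeff_map_poly)

lemma lsmult_add_right: "lsmult c (p + q) = lsmult c p + lsmult c q"
  by (rule poly_eqI) (simp add: distrib_left)

lemma lsmult_add_left: "lsmult (c + d) p = lsmult c p + lsmult d p"
  by (rule poly_eqI) (simp add: distrib_right)

lemma lsmult_0_left [simp]: "lsmult 0 p = 0"
  by (rule poly_eqI) simp

lemma lsmult_0_right [simp]: "lsmult c 0 = 0"
  by (rule poly_eqI) simp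

lemma lsmult_1_left [simp]: "lsmult 1 p = p"
  by (rule poly_eqI) simp

lemma lsmult_lsmult: "lsmult c (lsmult d p) = lsmult (c * d) p"
  by (rule poly_eqI) (simp add: mult.assoc)

lemma lsmult_sum: "lsmult c (sum f A) = (\<Sum>i\<in>A. lsmult c (f i))"
  by (induction A rule: infinite_finite_induct) (auto simp: lsmult_add_right)

lemma lsmult_pCons [simp]: "lsmult c (pCons a p) = pCons (c * a) (lsmult c p)"
  by (rule poly_eqI) (simp add: coeff_pCons split: nat.split)

lemma degree_map_poly_le_zero_preserving: "f 0 = 0 \<Longrightarrow> degree (map_poly f p) \<le> degree p"
  by (rule degree_le) (simp add: coeff_map_poly coeff_eq_0)

lemma degree_lsmult_le: "degree (lsmult c p) \<le> degree p"
  unfolding lsmult_def by (rule degree_map_poly_le_zero_preserving) simp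

definition min_degree :: "'a::zero poly set \<Rightarrow> nat" where
  "min_degree S = (LEAST d. \<exists>F\<in>S. F \<noteq> 0 \<and> degree F = d)"

lemma min_degree_attained:
  assumes "\<exists>F\<in>S. F \<noteq> 0"
  shows "\<exists>F\<in>S. F \<noteq> 0 \<and> degree F = min_degree S"
  unfolding min_degree_def
  by (rule LeastI_ex[of "\<lambda>d. \<exists>F\<in>S. F \<noteq> 0 \<and> degree F = d"]) (use assms in blast)

lemma min_degree_le: "F \<in> S \<Longrightarrow> F \<noteq> 0 \<Longrightarrow> min_degree S \<le> degree F"
  unfolding min_degree_def by (rule Least_le) blast

lemma min_degree_greatest:
  assumes "\<exists>F\<in>S. F \<noteq> 0" and "\<And>F. F \<in> S \<Longrightarrow> F \<noteq> 0 \<Longrightarrow> k \<le> degree F"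
  shows "k \<le> min_degree S"
  using min_degree_attained[OF assms(1)] assms(2) by force

lemma min_degree_antimono: "S \<subseteq> T \<Longrightarrow> \<exists>F\<in>S. F \<noteq> 0 \<Longrightarrow> min_degree T \<le> min_degree S"
  using min_degree_attained[of S] min_degree_le[of _ T] by force

locale skew_poly =
  fixes \<sigma> \<delta> :: "'a::division_ring \<Rightarrow> 'a"
  assumes endo: "is_ring_endo \<sigma>" and der: "is_sigma_derivation \<sigma> \<delta>"
begin

lemma sigma_add: "\<sigma> (x + y) = \<sigma> x + \<sigma> y"
  using endo unfolding is_ring_endo_def by blast

lemma sigma_mult: "\<sigma> (x * y) = \<sigma> x * \<sigma> y"
  using endo unfolding is_ring_endo_def by blast

lemma sigma_1 [simp]: "\<sigma> 1 = 1"
  using endo unfolding is_ring_endo_def by blast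

lemma delta_add: "\<delta> (x + y) = \<delta> x + \<delta> y"
  using der unfolding is_sigma_derivation_def by blast

lemma delta_mult: "\<delta> (x * y) = \<sigma> x * \<delta> y + \<delta> x * y"
  using der unfolding is_sigma_derivation_def by blast

lemma sigma_0 [simp]: "\<sigma> 0 = 0"
  using sigma_add[of 0 0] by simp

lemma delta_0 [simp]: "\<delta> 0 = 0"
  using delta_add[of 0 0] by simp

lemma sigma_minus: "\<sigma> (- x) = - \<sigma> x"
  using minus_unique[of "\<sigma> x" "\<sigma> (- x)"] sigma_add[of x "- x"] by simp

lemma delta_minus: "\<delta> (- x) = - \<delta> x"
  using minus_unique[of "\<delta> x" "\<delta> (- x)"] delta_add[of x "- x"] by simp

lemma sigma_eq_0_iff [simp]: "\<sigma> x = 0 \<longleftrightarrow> x = 0"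
proof
  assume "\<sigma> x = 0"
  then have "\<sigma> (x * inverse x) = 0" by (simp add: sigma_mult)
  then show "x = 0" by (cases "x = 0") simp_all
qed simp

lemma delta_1 [simp]: "\<delta> 1 = 0"
  using delta_mult[of 1 1] by simp

lemma funpow_sigma_eq_0_iff [simp]: "(\<sigma> ^^ k) x = 0 \<longleftrightarrow> x = 0"
  by (induction k) auto

abbreviation X :: "'a poly \<Rightarrow> 'a poly" where "X \<equiv> xmul \<sigma> \<delta>"

abbreviation skew_times :: "'a poly \<Rightarrow> 'a poly \<Rightarrow> 'a poly" (infixl "\<star>" 70) where
  "F \<star> G \<equiv> skew_mult \<sigma> \<delta> F G"

lemma coeff_xmul: "coeff (X p) k = (if k = 0 then 0 else \<sigma> (coeff p (k - 1))) + \<delta> (coeff p k)"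
  unfolding xmul_def coeff_add by (cases k) (simp_all add: coeff_map_poly)

lemma xmul_add: "X (p + q) = X p + X q"
  by (rule poly_eqI) (simp add: coeff_xmul sigma_add delta_add algebra_simps)

lemma xmul_0 [simp]: "X 0 = 0"
  by (rule poly_eqI) (simp add: coeff_xmul)

lemma xmul_lsmult: "X (lsmult c p) = lsmult (\<sigma> c) (X p) + lsmult (\<delta> c) p"
  by (rule poly_eqI) (simp add: coeff_xmul sigma_mult delta_mult algebra_simps)

lemma funpow_xmul_add: "(X ^^ i) (p + q) = (X ^^ i) p + (X ^^ i) q"
  by (induction i) (auto simp: xmul_add)

lemma funpow_xmul_0 [simp]: "(X ^^ i) 0 = 0"
  by (induction i) auto

lemma funpow_xmul_sum: "(X ^^ i) (sum f A) = (\<Sum>j\<in>A. (X ^^ i) (f j))"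
  by (induction A rule: infinite_finite_induct) (auto simp: funpow_xmul_add)

lemma skew_mult_eq_sum:
  "degree F < N \<Longrightarrow> F \<star> G = (\<Sum>i<N. lsmult (coeff F i) ((X ^^ i) G))"
  unfolding skew_mult_def lsmult_def[symmetric]
  by (rule sum.mono_neutral_left) (auto simp: coeff_eq_0)

lemma skew_mult_add_left: "(F + F') \<star> G = F \<star> G + F' \<star> G"
proof -
  let ?N = "Suc (max (degree F) (degree F'))"
  have "degree (F + F') < ?N" using degree_add_le_max[of F F'] by simp
  then show ?thesis
    by (simp add: skew_mult_eq_sum[of _ ?N] sum.distrib lsmult_add_left del: sum.lessThan_Suc)
qed

lemma skew_mult_add_right: "F \<star> (G + G') = F \<star> G + F \<star> G'"
  by (simp add: skew_mult_eq_sum[of _ "Suc (degree F)"] sum.distrib lsmult_add_right funpow_xmul_add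
      del: sum.lessThan_Suc)

lemma skew_mult_0_left [simp]: "0 \<star> G = 0"
  by (simp add: skew_mult_eq_sum[of _ 1])

lemma skew_mult_0_right [simp]: "F \<star> 0 = 0"
  by (simp add: skew_mult_def)

lemma skew_mult_const_left [simp]: "[:c:] \<star> G = lsmult c G"
  by (simp add: skew_mult_def lsmult_def)

lemma skew_mult_minus_left: "(- F) \<star> G = - (F \<star> G)"
  using minus_unique[of "F \<star> G"] skew_mult_add_left[of F "- F" G] by simp

lemma skew_mult_diff_left: "(F - F') \<star> G = F \<star> G - F' \<star> G"
  using skew_mult_add_left[of F "- F'" G] by (simp add: skew_mult_minus_left)

lemma skew_mult_sum_left: "sum f A \<star> G = (\<Sum>i\<in>A. f i \<star> G)"
  by (induction A rule: infinite_finite_induct) (auto simp: skew_mult_add_left)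

lemma skew_mult_lsmult_left: "lsmult c F \<star> G = lsmult c (F \<star> G)"
proof -
  have "degree (lsmult c F) < Suc (degree F)"
    using degree_lsmult_le le_imp_less_Suc by blast
  then show ?thesis
    by (simp add: skew_mult_eq_sum[of _ "Suc (degree F)"] lsmult_sum lsmult_lsmult
        del: sum.lessThan_Suc)
qed

lemma skew_mult_pCons_0_left: "pCons 0 H \<star> G = H \<star> X G"
proof -
  let ?N = "Suc (degree H)"
  have "degree (pCons 0 H) < Suc ?N" by (simp add: degree_pCons_le le_imp_less_Suc)
  then have "pCons 0 H \<star> G = (\<Sum>i<Suc ?N. lsmult (coeff (pCons 0 H) i) ((X ^^ i) G))"
    by (rule skew_mult_eq_sum)
  also have "\<dots> = (\<Sum>i<?N. lsmult (coeff H i) ((X ^^ Suc i) G))"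
    by (subst sum.lessThan_Suc_shift) simp
  also have "\<dots> = H \<star> X G"
    by (simp add: skew_mult_eq_sum[of H ?N] funpow_Suc_right del: funpow.simps)
  finally show ?thesis .
qed

lemma skew_mult_map_poly_left:
  assumes "f 0 = 0"
  shows "map_poly f H \<star> G = (\<Sum>i<Suc (degree H). lsmult (f (coeff H i)) ((X ^^ i) G))"
proof -
  have "degree (map_poly f H) < Suc (degree H)"
    using degree_map_poly_le_zero_preserving[of f, OF assms] by (simp add: le_imp_less_Suc)
  then show ?thesis by (simp add: skew_mult_eq_sum coeff_map_poly assms del: sum.lessThan_Suc)
qed

lemma xmul_skew_mult: "X (F \<star> G) = X F \<star> G"
proof -
  let ?N = "Suc (degree F)"
  have "X (F \<star> G) = (\<Sum>i<?N. X (lsmult (coeff F i) ((X ^^ i) G)))"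
    using funpow_xmul_sum[of 1] by (simp add: skew_mult_eq_sum[of F ?N] del: sum.lessThan_Suc)
  also have "\<dots> = (\<Sum>i<?N. lsmult (\<sigma> (coeff F i)) ((X ^^ Suc i) G))
                 + (\<Sum>i<?N. lsmult (\<delta> (coeff F i)) ((X ^^ i) G))"
    by (simp add: xmul_lsmult sum.distrib del: sum.lessThan_Suc)
  also have "\<dots> = map_poly \<sigma> F \<star> X G + map_poly \<delta> F \<star> G"
    by (simp add: skew_mult_map_poly_left funpow_Suc_right del: funpow.simps sum.lessThan_Suc)
  also have "\<dots> = X F \<star> G"
    by (simp add: xmul_def skew_mult_add_left skew_mult_pCons_0_left)
  finally show ?thesis .
qed

lemma skew_mult_assoc: "F \<star> G \<star> H = F \<star> (G \<star> H)"
proof -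
  have funpow_xmul: "(X ^^ k) (F \<star> G) = (X ^^ k) F \<star> G" for k F G
    by (induction k) (auto simp: xmul_skew_mult)
  have "F \<star> G \<star> H = (\<Sum>i\<le>degree F. lsmult (coeff F i) ((X ^^ i) G) \<star> H)"
    unfolding skew_mult_def[of _ _ F G] by (simp add: skew_mult_sum_left lsmult_def)
  also have "\<dots> = (\<Sum>i\<le>degree F. lsmult (coeff F i) ((X ^^ i) (G \<star> H)))"
    by (simp add: skew_mult_lsmult_left funpow_xmul)
  also have "\<dots> = F \<star> (G \<star> H)"
    unfolding skew_mult_def[of _ _ F "G \<star> H"] by (simp add: lsmult_def)
  finally show ?thesis .
qed

lemma degree_xmul:
  assumes "p \<noteq> 0"
  shows "degree (X p) = Suc (degree p) \<and> lead_coeff (X p) = \<sigma> (lead_coeff p)"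
proof -
  have top: "coeff (X p) (Suc (degree p)) = \<sigma> (lead_coeff p)"
    by (simp add: coeff_xmul coeff_eq_0)
  have "degree (X p) \<le> Suc (degree p)"
    by (rule degree_le) (simp add: coeff_xmul coeff_eq_0)
  moreover have "Suc (degree p) \<le> degree (X p)"
    by (rule le_degree) (use top assms in simp)
  ultimately show ?thesis using top by simp
qed

lemma degree_funpow_xmul:
  assumes "p \<noteq> 0"
  shows "(X ^^ i) p \<noteq> 0 \<and> degree ((X ^^ i) p) = degree p + i
    \<and> lead_coeff ((X ^^ i) p) = (\<sigma> ^^ i) (lead_coeff p)"
proof (induction i)
  case (Suc i)
  then have "(X ^^ i) p \<noteq> 0" by simp
  from degree_xmul[OF this] Suc show ?case by auto
qed (use assms in simp)

lemma coeff_skew_mult: "coeff (F \<star> G) n = (\<Sum>i\<le>degree F. coeff F i * coeff ((X ^^ i) G) n)"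
  unfolding skew_mult_def by (simp add: coeff_sum coeff_map_poly)

lemma skew_mult_1_right [simp]: "F \<star> [:1:] = F"
proof -
  have "(X ^^ i) [:1:] = monom 1 i" for i
  proof (induction i)
    case (Suc i)
    have "X (monom 1 i) = monom 1 (Suc i)"
      by (rule poly_eqI) (auto simp: coeff_xmul coeff_monom)
    then show ?case using Suc by simp
  qed (simp add: monom_0)
  then have "coeff (F \<star> [:1:]) n = (\<Sum>i\<le>degree F. coeff F i * (if i = n then 1 else 0))" for n
    by (simp add: coeff_skew_mult coeff_monom)
  then have "coeff (F \<star> [:1:]) n = (\<Sum>i\<le>degree F. if i = n then coeff F i else 0)" for n
    by (simp add: if_distrib cong: if_cong)
  then have "coeff (F \<star> [:1:]) n = (if n \<le> degree F then coeff F n else 0)" for n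
    by simp
  then show ?thesis
    by (intro poly_eqI) (auto simp: coeff_eq_0)
qed

lemma coeff_skew_mult_top:
  assumes F: "F \<noteq> 0" and G: "G \<noteq> 0" and n: "degree F + degree G \<le> n"
  shows "coeff (F \<star> G) n
    = (if n = degree F + degree G then lead_coeff F * (\<sigma> ^^ degree F) (lead_coeff G) else 0)"
proof -
  have low: "coeff ((X ^^ i) G) n = 0" if "i < degree F" for i
  proof (rule coeff_eq_0)
    show "degree ((X ^^ i) G) < n" using degree_funpow_xmul[OF G, of i] that n by simp
  qed
  have "coeff (F \<star> G) n = (\<Sum>i<degree F. coeff F i * coeff ((X ^^ i) G) n)
      + lead_coeff F * coeff ((X ^^ degree F) G) n"
    unfolding coeff_skew_mult by (simp add: lessThan_Suc_atMost[symmetric])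
  also have "(\<Sum>i<degree F. coeff F i * coeff ((X ^^ i) G) n) = 0"
    by (rule sum.neutral) (simp add: low)
  also have "coeff ((X ^^ degree F) G) n
      = (if n = degree F + degree G then (\<sigma> ^^ degree F) (lead_coeff G) else 0)"
    using degree_funpow_xmul[OF G, of "degree F"] n by (auto simp: add.commute coeff_eq_0)
  finally show ?thesis by simp
qed

lemma degree_skew_mult:
  assumes F: "F \<noteq> 0" and G: "G \<noteq> 0"
  shows "degree (F \<star> G) = degree F + degree G"
    and "lead_coeff (F \<star> G) = lead_coeff F * (\<sigma> ^^ degree F) (lead_coeff G)"
proof -
  have top: "coeff (F \<star> G) (degree F + degree G) \<noteq> 0"
    using coeff_skew_mult_top[OF F G order.refl] F G by simp
  have "degree (F \<star> G) \<le> degree F + degree G"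
    by (rule degree_le) (simp add: coeff_skew_mult_top[OF F G])
  moreover have "degree F + degree G \<le> degree (F \<star> G)"
    using top by (rule le_degree)
  ultimately show deg: "degree (F \<star> G) = degree F + degree G" by simp
  show "lead_coeff (F \<star> G) = lead_coeff F * (\<sigma> ^^ degree F) (lead_coeff G)"
    unfolding deg using coeff_skew_mult_top[OF F G order.refl] by simp
qed

lemma skew_mult_eq_0_iff [simp]: "F \<star> G = 0 \<longleftrightarrow> F = 0 \<or> G = 0"
proof (cases "F = 0 \<or> G = 0")
  case False
  then have "coeff (F \<star> G) (degree F + degree G) \<noteq> 0"
    using coeff_skew_mult_top[of F G, OF _ _ order.refl] by simp
  then show ?thesis using False by auto
qed auto

lemma xminus_nonzero [simp]: "xminus a \<noteq> 0"
  by (simp add: xminus_def)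

lemma degree_xminus [simp]: "degree (xminus a) = 1"
  by (simp add: xminus_def)

lemma skew_right_division:
  assumes G: "G \<noteq> 0"
  shows "\<exists>Q R. F = Q \<star> G + R \<and> (R = 0 \<or> degree R < degree G)"
proof (induction "degree F" arbitrary: F rule: less_induct)
  case less
  show ?case
  proof (cases "F = 0 \<or> degree F < degree G")
    case True
    then have "F = 0 \<star> G + F \<and> (F = 0 \<or> degree F < degree G)" by simp
    then show ?thesis by blast
  next
    case False
    then have F: "F \<noteq> 0" and dge: "degree G \<le> degree F" by auto
    define d where "d = degree F - degree G"
    define T where "T = monom (lead_coeff F * inverse ((\<sigma> ^^ d) (lead_coeff G))) d"
    have T: "T \<noteq> 0" "degree T = d" "lead_coeff T * (\<sigma> ^^ d) (lead_coeff G) = lead_coeff F"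
      using F G by (auto simp: T_def degree_monom_eq mult.assoc)
    have TG: "degree (T \<star> G) = degree F" "lead_coeff (T \<star> G) = lead_coeff F"
      using degree_skew_mult[OF T(1) G] T dge by (auto simp: d_def)
    define F' where "F' = F - T \<star> G"
    show ?thesis
    proof (cases "F' = 0")
      case True
      then have "F = T \<star> G + 0" by (simp add: F'_def)
      then show ?thesis by blast
    next
      case False
      have "degree F' < degree F"
      proof (rule ccontr)
        assume "\<not> degree F' < degree F"
        moreover have "degree F' \<le> degree F"
          using degree_diff_le[of F "degree F" "T \<star> G"] TG by (simp add: F'_def)
        ultimately have "degree F' = degree F" by simp
        then have "lead_coeff F' = 0" using TG by (simp add: F'_def)
        then show False using False by simp
      qed
      from less(1)[OF this] obtain Q R where QR: "F' = Q \<star> G + R" "R = 0 \<or> degree R < degree G"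
        by blast
      have "F = (Q + T) \<star> G + R"
        using QR(1) by (simp add: F'_def skew_mult_add_left algebra_simps)
      then show ?thesis using QR(2) by blast
    qed
  qed
qed

section \<open>Right evaluation\<close>

abbreviation ev :: "'a poly \<Rightarrow> 'a \<Rightarrow> 'a" where "ev \<equiv> skew_eval \<sigma> \<delta>"

abbreviation rdvd :: "'a poly \<Rightarrow> 'a poly \<Rightarrow> bool" where "rdvd \<equiv> right_dvd \<sigma> \<delta>"

lemma skew_evalI:
  assumes "F = Q \<star> xminus a + [:r:]"
  shows "ev F a = r"
  unfolding skew_eval_def
proof (rule the_equality)
  show "\<exists>Q. F = Q \<star> xminus a + [:r:]" using assms by blast
next
  fix r' assume "\<exists>Q. F = Q \<star> xminus a + [:r':]"
  then obtain Q' where Q': "F = Q' \<star> xminus a + [:r':]" by blast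
  have "(Q - Q') \<star> xminus a = (Q \<star> xminus a + [:r:]) - (Q' \<star> xminus a + [:r':]) + [:r' - r:]"
    by (simp add: skew_mult_diff_left algebra_simps)
  also have "\<dots> = [:r' - r:]" using assms Q' by simp
  finally have "(Q - Q') \<star> xminus a = [:r' - r:]" .
  then show "r' = r"
    using degree_skew_mult(1)[of "Q - Q'" "xminus a"] by (cases "Q = Q'") auto
qed

lemma skew_eval_remainder: "\<exists>Q. F = Q \<star> xminus a + [:ev F a:]"
proof -
  obtain Q R where QR: "F = Q \<star> xminus a + R" "R = 0 \<or> degree R < degree (xminus a)"
    using skew_right_division[OF xminus_nonzero] by blast
  then have "degree R = 0" by auto
  then obtain r where r: "R = [:r:]" by (rule degree_eq_zeroE)
  with QR(1) have "F = Q \<star> xminus a + [:r:]" by simp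
  moreover from this have "ev F a = r" by (rule skew_evalI)
  ultimately show ?thesis by (intro exI[of _ Q]) simp
qed

lemma skew_eval_eq_0_iff: "ev F a = 0 \<longleftrightarrow> rdvd (xminus a) F"
proof
  assume "ev F a = 0"
  then show "rdvd (xminus a) F"
    using skew_eval_remainder[of F a] unfolding right_dvd_def by auto
next
  assume "rdvd (xminus a) F"
  then obtain Q where "F = Q \<star> xminus a + [:0:]" unfolding right_dvd_def by auto
  then show "ev F a = 0" by (rule skew_evalI)
qed

lemma skew_eval_add: "ev (F + G) a = ev F a + ev G a"
proof -
  obtain Q where Q: "F = Q \<star> xminus a + [:ev F a:]"
    using skew_eval_remainder by blast
  obtain Q' where Q': "G = Q' \<star> xminus a + [:ev G a:]"
    using skew_eval_remainder by blast
  have "F + G = (Q + Q') \<star> xminus a + [:ev F a + ev G a:]"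
    by (subst Q, subst Q') (simp add: skew_mult_add_left algebra_simps)
  then show ?thesis by (rule skew_evalI)
qed

lemma skew_eval_const [simp]: "ev [:c:] a = c"
  by (rule skew_evalI[of _ 0]) simp

lemma skew_eval_0 [simp]: "ev 0 a = 0"
  using skew_eval_const[of 0 a] by simp

lemma skew_eval_xminus: "ev (xminus b) a = a - b"
  by (rule skew_evalI[of _ "[:1:]"]) (simp add: xminus_def)

abbreviation cj :: "'a \<Rightarrow> 'a \<Rightarrow> 'a" where "cj \<equiv> skew_conj \<sigma> \<delta>"

lemma skew_conj_mult:
  assumes "g \<noteq> 0"
  shows "b = cj a g \<longleftrightarrow> b * g = \<sigma> g * a + \<delta> g"
proof
  assume "b = cj a g"
  then have "b * g = (\<sigma> g * a + \<delta> g) * (inverse g * g)"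
    by (simp add: skew_conj_def distrib_right mult.assoc)
  then show "b * g = \<sigma> g * a + \<delta> g" using assms by simp
next
  assume "b * g = \<sigma> g * a + \<delta> g"
  then have "b = (\<sigma> g * a + \<delta> g) * inverse g"
    using assms by (metis mult.assoc right_inverse mult.right_neutral)
  then show "b = cj a g" by (simp add: skew_conj_def distrib_right)
qed

lemma xminus_skew_conj_commute:
  assumes "g \<noteq> 0"
  shows "xminus (cj a g) \<star> [:g:] = [:\<sigma> g:] \<star> xminus a"
proof -
  have "X [:g:] = [:\<delta> g, \<sigma> g:]"
    by (rule poly_eqI) (simp add: coeff_xmul coeff_pCons split: nat.split)
  then have "xminus (cj a g) \<star> [:g:] = [:- (cj a g * g) + \<delta> g, \<sigma> g:]"
    by (simp add: skew_mult_eq_sum[of _ 2] numeral_2_eq_2 xminus_def)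
  then show ?thesis
    using skew_conj_mult[OF assms, of "cj a g" a] by (simp add: xminus_def)
qed

lemma skew_eval_skew_mult:
  "ev (F \<star> G) a = (if ev G a = 0 then 0 else ev F (cj a (ev G a)) * ev G a)"
proof -
  define g where "g = ev G a"
  obtain Q where Q: "G = Q \<star> xminus a + [:g:]" using skew_eval_remainder g_def by blast
  have FG: "F \<star> G = (F \<star> Q) \<star> xminus a + F \<star> [:g:]"
    by (subst Q) (simp add: skew_mult_add_right skew_mult_assoc)
  show ?thesis
  proof (cases "g = 0")
    case True
    then show ?thesis using FG skew_evalI[of "F \<star> G" _ a 0] by (simp add: g_def)
  next
    case False
    define b where "b = cj a g"
    obtain Q' where Q': "F = Q' \<star> xminus b + [:ev F b:]" using skew_eval_remainder by blast
    have "F \<star> [:g:] = Q' \<star> (xminus b \<star> [:g:]) + [:ev F b * g:]"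
      by (subst Q') (simp add: skew_mult_add_left skew_mult_assoc)
    also have "\<dots> = (Q' \<star> [:\<sigma> g:]) \<star> xminus a + [:ev F b * g:]"
      using xminus_skew_conj_commute[OF False] by (simp add: b_def skew_mult_assoc)
    finally have "F \<star> G = (F \<star> Q + Q' \<star> [:\<sigma> g:]) \<star> xminus a + [:ev F b * g:]"
      using FG by (simp add: skew_mult_add_left add.assoc)
    then show ?thesis using skew_evalI False by (simp add: g_def b_def)
  qed
qed

section \<open>Ore's theorem and P-independence\<close>

lemma rdvd_refl: "rdvd A A"
  unfolding right_dvd_def by (rule exI[of _ "[:1:]"]) simp

lemma rdvd_trans: "rdvd A B \<Longrightarrow> rdvd B C \<Longrightarrow> rdvd A C"
  unfolding right_dvd_def by (auto simp flip: skew_mult_assoc)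

lemma rdvd_skew_mult_self: "rdvd A (U \<star> A)"
  unfolding right_dvd_def by blast

lemma rdvd_skew_mult: "rdvd A B \<Longrightarrow> rdvd A (U \<star> B)"
  using rdvd_skew_mult_self rdvd_trans by blast

lemma rdvd_add: "rdvd A B \<Longrightarrow> rdvd A C \<Longrightarrow> rdvd A (B + C)"
  unfolding right_dvd_def by (auto simp flip: skew_mult_add_left)

lemma rdvd_diff: "rdvd A B \<Longrightarrow> rdvd A C \<Longrightarrow> rdvd A (B - C)"
  unfolding right_dvd_def by (auto simp flip: skew_mult_diff_left)

lemma rdvd_imp_degree_le: "rdvd A F \<Longrightarrow> F \<noteq> 0 \<Longrightarrow> degree A \<le> degree F"
  unfolding right_dvd_def using degree_skew_mult(1) by fastforce

definition common_multiples :: "'a poly \<Rightarrow> 'a poly \<Rightarrow> 'a poly set" where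
  "common_multiples A B = {F. rdvd A F \<and> rdvd B F}"

definition left_combinations :: "'a poly \<Rightarrow> 'a poly \<Rightarrow> 'a poly set" where
  "left_combinations A B = {U \<star> A + V \<star> B | U V. True}"

lemma left_combinations_left: "A \<in> left_combinations A B"
  unfolding left_combinations_def by (rule CollectI, rule exI[of _ "[:1:]"], rule exI[of _ 0]) simp

lemma left_combinations_right: "B \<in> left_combinations A B"
  unfolding left_combinations_def by (rule CollectI, rule exI[of _ 0], rule exI[of _ "[:1:]"]) simp

lemma left_combinations_rdvd: "rdvd D A \<Longrightarrow> rdvd D B \<Longrightarrow> F \<in> left_combinations A B \<Longrightarrow> rdvd D F"
  unfolding left_combinations_def by (auto intro: rdvd_add rdvd_skew_mult)

lemma left_combinations_subset:
  assumes "rdvd D A"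
  shows "left_combinations A B \<subseteq> left_combinations D B"
proof
  fix F assume "F \<in> left_combinations A B"
  then obtain U V where F: "F = U \<star> A + V \<star> B" unfolding left_combinations_def by blast
  obtain Q where "A = Q \<star> D" using assms unfolding right_dvd_def by blast
  with F have "F = (U \<star> Q) \<star> D + V \<star> B" by (simp add: skew_mult_assoc)
  then show "F \<in> left_combinations D B" unfolding left_combinations_def by blast
qed

lemma left_combinations_commute: "left_combinations A B = left_combinations B A"
  unfolding left_combinations_def by (auto; metis add.commute)

lemma left_combinations_euclid:
  assumes "A = Q \<star> B + R"
  shows "left_combinations A B = left_combinations B R"
proof -
  have "U \<star> A + V \<star> B = (U \<star> Q + V) \<star> B + U \<star> R" for U V
    by (simp add: assms skew_mult_add_left skew_mult_add_right skew_mult_assoc algebra_simps)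
  moreover have "U \<star> B + V \<star> R = V \<star> A + (U - V \<star> Q) \<star> B" for U V
    by (simp add: assms skew_mult_add_right skew_mult_diff_left skew_mult_assoc algebra_simps)
  ultimately show ?thesis unfolding left_combinations_def by blast
qed

lemma min_degree_combination_rdvd:
  assumes D: "D \<in> left_combinations A B" "D \<noteq> 0" "degree D = min_degree (left_combinations A B)"
  shows "rdvd D A" and "rdvd D B"
proof -
  have "rdvd D C" if C: "C \<in> left_combinations A B" for C
  proof -
    obtain Q R where QR: "C = Q \<star> D + R" "R = 0 \<or> degree R < degree D"
      using skew_right_division[OF D(2)] by blast
    obtain U V U' V' where "C = U \<star> A + V \<star> B" "D = U' \<star> A + V' \<star> B"
      using C D(1) unfolding left_combinations_def by blast
    then have "R = (U - Q \<star> U') \<star> A + (V - Q \<star> V') \<star> B"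
      using QR(1) by (simp add: skew_mult_diff_left skew_mult_add_right skew_mult_assoc algebra_simps)
    then have "R \<in> left_combinations A B" unfolding left_combinations_def by blast
    then have "R = 0" using QR(2) D(3) min_degree_le[of R] by fastforce
    then show ?thesis using QR(1) unfolding right_dvd_def by (intro exI[of _ Q]) simp
  qed
  then show "rdvd D A" "rdvd D B" using left_combinations_left left_combinations_right by blast+
qed

lemma min_degree_rdvd_case:
  assumes A: "A \<noteq> 0" and B: "B \<noteq> 0" and BA: "rdvd B A"
  shows "A \<in> common_multiples A B"
    and "min_degree (common_multiples A B) = degree A"
    and "min_degree (left_combinations A B) = degree B"
proof -
  have CM: "common_multiples A B = {F. rdvd A F}"
    unfolding common_multiples_def using rdvd_trans[OF BA] by blast
  show A_in: "A \<in> common_multiples A B" unfolding CM using rdvd_refl by blast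
  show "min_degree (common_multiples A B) = degree A"
  proof (rule antisym)
    show "min_degree (common_multiples A B) \<le> degree A" using min_degree_le[OF A_in A] .
    show "degree A \<le> min_degree (common_multiples A B)"
      by (rule min_degree_greatest) (use A_in A CM rdvd_imp_degree_le in auto)
  qed
  show "min_degree (left_combinations A B) = degree B"
  proof (rule antisym)
    show "min_degree (left_combinations A B) \<le> degree B"
      using min_degree_le[OF left_combinations_right B] .
    show "degree B \<le> min_degree (left_combinations A B)"
      by (rule min_degree_greatest)
        (use left_combinations_right B left_combinations_rdvd[OF BA rdvd_refl] rdvd_imp_degree_le in auto)
  qed
qed

lemma min_degree_common_multiples_euclid:
  assumes QR: "A = Q \<star> B + R" and A: "A \<noteq> 0" and R: "R \<noteq> 0"
    and W: "W \<in> common_multiples B R" "W \<noteq> 0"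
  shows "\<exists>F\<in>common_multiples A B. F \<noteq> 0"
    and "min_degree (common_multiples A B) + degree R = min_degree (common_multiples B R) + degree A"
proof -
  obtain W0 where W0: "W0 \<in> common_multiples B R" "W0 \<noteq> 0"
      "degree W0 = min_degree (common_multiples B R)"
    using min_degree_attained W by blast
  obtain U V where UV: "W0 = U \<star> R" "W0 = V \<star> B"
    using W0(1) unfolding common_multiples_def right_dvd_def by blast
  have U0: "U \<noteq> 0" using UV W0(2) by auto
  have "U \<star> A = (U \<star> Q + V) \<star> B"
    by (simp add: QR skew_mult_add_left skew_mult_add_right skew_mult_assoc flip: UV)
  then have UA: "U \<star> A \<in> common_multiples A B"
    unfolding common_multiples_def right_dvd_def by blast
  moreover have UA0: "U \<star> A \<noteq> 0" using U0 A by simp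
  ultimately show "\<exists>F\<in>common_multiples A B. F \<noteq> 0" by blast
  have le1: "min_degree (common_multiples A B) + degree R \<le> min_degree (common_multiples B R) + degree A"
    using min_degree_le[OF UA UA0] W0(3) UV(1) degree_skew_mult(1)[OF U0] A R by simp
  obtain Z where Z: "Z \<in> common_multiples A B" "Z \<noteq> 0" "degree Z = min_degree (common_multiples A B)"
    using min_degree_attained UA UA0 by blast
  obtain S T where ST: "Z = S \<star> A" "Z = T \<star> B"
    using Z(1) unfolding common_multiples_def right_dvd_def by blast
  have S0: "S \<noteq> 0" using ST Z(2) by auto
  have "S \<star> R = S \<star> A - (S \<star> Q) \<star> B"
    by (simp add: QR skew_mult_add_right skew_mult_assoc)
  also have "\<dots> = (T - S \<star> Q) \<star> B" using ST by (simp add: skew_mult_diff_left)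
  finally have SR: "S \<star> R \<in> common_multiples B R"
    unfolding common_multiples_def right_dvd_def by blast
  have "min_degree (common_multiples B R) + degree A \<le> min_degree (common_multiples A B) + degree R"
    using min_degree_le[OF SR] S0 R Z(3) ST(1) degree_skew_mult(1)[OF S0] A by simp
  with le1 show "min_degree (common_multiples A B) + degree R
      = min_degree (common_multiples B R) + degree A" by simp
qed

text \<open>Ore's theorem: deg lclm(A, B) + deg gcrd(A, B) = deg A + deg B.\<close>
theorem min_degree_common_multiples_add_combinations:
  assumes "A \<noteq> 0" "B \<noteq> 0"
  shows "(\<exists>F\<in>common_multiples A B. F \<noteq> 0)
    \<and> min_degree (common_multiples A B) + min_degree (left_combinations A B) = degree A + degree B"
  using assms
proof (induction "degree B" arbitrary: A B rule: less_induct)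
  case less
  obtain Q R where QR: "A = Q \<star> B + R" "R = 0 \<or> degree R < degree B"
    using skew_right_division[OF less.prems(2)] by blast
  show ?case
  proof (cases "R = 0")
    case True
    then have "rdvd B A" using QR(1) unfolding right_dvd_def by (intro exI[of _ Q]) simp
    from min_degree_rdvd_case[OF less.prems this] show ?thesis using less.prems by auto
  next
    case False
    with QR(2) have "degree R < degree B" by simp
    from less(1)[OF this less.prems(2) False] obtain W where
      W: "W \<in> common_multiples B R" "W \<noteq> 0" and
      IH: "min_degree (common_multiples B R) + min_degree (left_combinations B R) = degree B + degree R"
      by blast
    note euclid = min_degree_common_multiples_euclid[OF QR(1) less.prems(1) False W]
    show ?thesis using euclid IH left_combinations_euclid[OF QR(1)] by auto
  qed
qed

lemma I_ideal_skew_mult: "F \<in> I_ideal \<sigma> \<delta> \<Omega> \<Longrightarrow> U \<star> F \<in> I_ideal \<sigma> \<delta> \<Omega>"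
  unfolding I_ideal_def by (auto intro: rdvd_skew_mult)

lemma I_ideal_diff: "F \<in> I_ideal \<sigma> \<delta> \<Omega> \<Longrightarrow> G \<in> I_ideal \<sigma> \<delta> \<Omega> \<Longrightarrow> F - G \<in> I_ideal \<sigma> \<delta> \<Omega>"
  unfolding I_ideal_def by (auto intro: rdvd_diff)

lemma F_gen_generates:
  assumes "I_ideal \<sigma> \<delta> \<Omega> \<noteq> {0}"
  shows "F_gen \<sigma> \<delta> \<Omega> \<noteq> 0"
    and "degree (F_gen \<sigma> \<delta> \<Omega>) = min_degree (I_ideal \<sigma> \<delta> \<Omega>)"
    and "G \<in> I_ideal \<sigma> \<delta> \<Omega> \<longleftrightarrow> rdvd (F_gen \<sigma> \<delta> \<Omega>) G"
proof -
  let ?I = "I_ideal \<sigma> \<delta> \<Omega>" and ?F = "F_gen \<sigma> \<delta> \<Omega>"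
  have "0 \<in> ?I" unfolding I_ideal_def right_dvd_def by (auto intro: exI[of _ 0])
  with assms have "\<exists>F\<in>?I. F \<noteq> 0" by blast
  then obtain F0 where F0: "F0 \<in> ?I" "F0 \<noteq> 0" "degree F0 = min_degree ?I"
    using min_degree_attained by blast
  define c where "c = inverse (lead_coeff F0)"
  have "lsmult c F0 \<in> ?I" using I_ideal_skew_mult[OF F0(1), of "[:c:]"] by simp
  moreover have "degree (lsmult c F0) = min_degree ?I \<and> lead_coeff (lsmult c F0) = 1"
  proof -
    have lc: "lead_coeff F0 \<noteq> 0" using F0(2) by simp
    then have "[:c:] \<noteq> 0" by (simp add: c_def)
    from degree_skew_mult[OF this F0(2)] show ?thesis using F0(3) lc by (simp add: c_def)
  qed
  ultimately have "\<exists>F. F \<in> ?I \<and> lead_coeff F = 1 \<and> (\<forall>G\<in>?I. G \<noteq> 0 \<longrightarrow> degree F \<le> degree G)"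
    using min_degree_le by metis
  from someI_ex[OF this] have P: "?F \<in> ?I" "lead_coeff ?F = 1" "\<forall>G\<in>?I. G \<noteq> 0 \<longrightarrow> degree ?F \<le> degree G"
    unfolding F_gen_def using assms by auto
  show nz: "?F \<noteq> 0" using P(2) by auto
  show "degree ?F = min_degree ?I" using P(3) F0 min_degree_le[OF P(1) nz] by force
  show "G \<in> ?I \<longleftrightarrow> rdvd ?F G"
  proof
    assume G: "G \<in> ?I"
    obtain Q R where QR: "G = Q \<star> ?F + R" "R = 0 \<or> degree R < degree ?F"
      using skew_right_division[OF nz] by blast
    have "R = G - Q \<star> ?F" using QR by simp
    then have "R \<in> ?I" using I_ideal_diff[OF G I_ideal_skew_mult[OF P(1)]] by simp
    then have "R = 0" using QR(2) P(3) by force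
    then show "rdvd ?F G" using QR unfolding right_dvd_def by (intro exI[of _ Q]) simp
  next
    assume "rdvd ?F G"
    then show "G \<in> ?I" using I_ideal_skew_mult[OF P(1)] unfolding right_dvd_def by auto
  qed
qed

lemma I_ideal_insert:
  assumes "I_ideal \<sigma> \<delta> \<Omega> \<noteq> {0}"
  shows "I_ideal \<sigma> \<delta> (insert P \<Omega>) = common_multiples (F_gen \<sigma> \<delta> \<Omega>) P"
  using F_gen_generates(3)[OF assms] unfolding common_multiples_def I_ideal_def by auto

lemma I_ideal_nonzero_min_degree_le:
  assumes "finite \<Omega>" "0 \<notin> \<Omega>"
  shows "I_ideal \<sigma> \<delta> \<Omega> \<noteq> {0}" and "min_degree (I_ideal \<sigma> \<delta> \<Omega>) \<le> (\<Sum>P\<in>\<Omega>. degree P)"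
proof -
  have "I_ideal \<sigma> \<delta> \<Omega> \<noteq> {0} \<and> min_degree (I_ideal \<sigma> \<delta> \<Omega>) \<le> (\<Sum>P\<in>\<Omega>. degree P)"
    using assms
  proof (induction \<Omega> rule: finite_induct)
    case empty
    have "[:1:] \<in> I_ideal \<sigma> \<delta> {}" by (simp add: I_ideal_def)
    then show ?case using min_degree_le[of "[:1:]" "I_ideal \<sigma> \<delta> {}"] by auto
  next
    case (insert P \<Omega>)
    then have IH: "I_ideal \<sigma> \<delta> \<Omega> \<noteq> {0}" "min_degree (I_ideal \<sigma> \<delta> \<Omega>) \<le> (\<Sum>P\<in>\<Omega>. degree P)"
      and P0: "P \<noteq> 0" by auto
    note ore = min_degree_common_multiples_add_combinations[OF F_gen_generates(1)[OF IH(1)] P0]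
    show ?case
      using ore IH(2) F_gen_generates(2)[OF IH(1)] insert.hyps unfolding I_ideal_insert[OF IH(1)] by auto
  qed
  then show "I_ideal \<sigma> \<delta> \<Omega> \<noteq> {0}" "min_degree (I_ideal \<sigma> \<delta> \<Omega>) \<le> (\<Sum>P\<in>\<Omega>. degree P)"
    by auto
qed

lemma P_indep_iff_min_degree:
  assumes "finite \<Omega>" "0 \<notin> \<Omega>"
  shows "P_indep \<sigma> \<delta> \<Omega> \<longleftrightarrow> min_degree (I_ideal \<sigma> \<delta> \<Omega>) = (\<Sum>P\<in>\<Omega>. degree P)"
  using I_ideal_nonzero_min_degree_le[OF assms] F_gen_generates(2) assms(1) unfolding P_indep_def by auto

definition right_coprime :: "'a poly \<Rightarrow> 'a poly \<Rightarrow> bool" where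
  "right_coprime A B \<longleftrightarrow> min_degree (left_combinations A B) = 0"

lemma P_indep_insert_iff:
  assumes "finite \<Omega>" "0 \<notin> \<Omega>" "P \<noteq> 0" "P \<notin> \<Omega>"
  shows "P_indep \<sigma> \<delta> (insert P \<Omega>) \<longleftrightarrow> P_indep \<sigma> \<delta> \<Omega> \<and> right_coprime (F_gen \<sigma> \<delta> \<Omega>) P"
proof -
  note I = I_ideal_nonzero_min_degree_le[OF assms(1,2)]
  note ore = min_degree_common_multiples_add_combinations[OF F_gen_generates(1)[OF I(1)] assms(3)]
  have "P_indep \<sigma> \<delta> (insert P \<Omega>)
      \<longleftrightarrow> min_degree (common_multiples (F_gen \<sigma> \<delta> \<Omega>) P) = degree P + (\<Sum>Q\<in>\<Omega>. degree Q)"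
    using P_indep_iff_min_degree[of "insert P \<Omega>"] assms by (simp add: I_ideal_insert[OF I(1)])
  then show ?thesis
    using ore I(2) F_gen_generates(2)[OF I(1)] P_indep_iff_min_degree[OF assms(1,2)]
    unfolding right_coprime_def by auto
qed

lemma not_right_coprime_common_root:
  assumes "rdvd (xminus e) A" "rdvd (xminus e) B" "A \<noteq> 0"
  shows "\<not> right_coprime A B"
proof -
  have "1 \<le> min_degree (left_combinations A B)"
    using assms left_combinations_left
    by (intro min_degree_greatest) (fastforce dest: left_combinations_rdvd rdvd_imp_degree_le)+
  then show ?thesis unfolding right_coprime_def by simp
qed

lemma degree_1_imp_xminus_factor:
  assumes "degree D = 1"
  obtains c e where "D = [:c:] \<star> xminus e"
proof
  have "coeff D 1 \<noteq> 0" using assms leading_coeff_neq_0[of D] by force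
  then show "D = [:lead_coeff D:] \<star> xminus (- (inverse (lead_coeff D) * coeff D 0))"
    using assms by (intro poly_eqI) (auto simp: xminus_def coeff_pCons coeff_eq_0
        mult.assoc[symmetric] split: nat.split)
qed

section \<open>Multiplicity sequences\<close>

text \<open>If D is a gcrd of G and (x - c) P', coprimality of D and P' (Ore's theorem) forces
  deg D <= 1, so a nontrivial D is linear and produces a common root of P and P'.\<close>
lemma right_coprime_xminus_factor_iff:
  assumes G: "G \<noteq> 0" and P': "P' \<noteq> 0" and P: "P = xminus c \<star> P'"
    and unique_root: "\<And>b. ev P b = 0 \<Longrightarrow> b = e" and root: "ev P' e = 0"
  shows "right_coprime G P \<longleftrightarrow> right_coprime G P'"
proof
  have "left_combinations G P \<subseteq> left_combinations G P'"
    using left_combinations_subset[of P' P G] rdvd_skew_mult_self P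
    by (simp add: left_combinations_commute)
  then have "min_degree (left_combinations G P') \<le> min_degree (left_combinations G P)"
    by (rule min_degree_antimono) (use left_combinations_left G in blast)
  moreover assume "right_coprime G P"
  ultimately show "right_coprime G P'" unfolding right_coprime_def by simp
next
  assume coprime: "right_coprime G P'"
  show "right_coprime G P"
  proof (rule ccontr)
    assume not_coprime: "\<not> right_coprime G P"
    obtain D where D: "D \<in> left_combinations G P" "D \<noteq> 0"
      "degree D = min_degree (left_combinations G P)"
      using min_degree_attained left_combinations_left G by blast
    have DG: "rdvd D G" and DP: "rdvd D P" using min_degree_combination_rdvd[OF D] by auto
    have "min_degree (left_combinations D P') \<le> min_degree (left_combinations G P')"
      using min_degree_antimono[OF left_combinations_subset[OF DG]] left_combinations_left G by blast
    then have "min_degree (common_multiples D P') = degree D + degree P'"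
      using coprime min_degree_common_multiples_add_combinations[OF D(2) P']
      unfolding right_coprime_def by simp
    moreover have "P \<in> common_multiples D P'" "P \<noteq> 0"
      using DP P P' rdvd_skew_mult_self unfolding common_multiples_def by auto
    ultimately have "degree D + degree P' \<le> degree P" by (metis min_degree_le)
    then have "degree D = 1"
      using P P' D(3) not_coprime degree_skew_mult(1)[of "xminus c" P']
      unfolding right_coprime_def by simp
    then obtain c' e' where "D = [:c':] \<star> xminus e'" by (rule degree_1_imp_xminus_factor)
    then have De': "rdvd (xminus e') D" unfolding right_dvd_def by blast
    then have "ev P e' = 0" using DP rdvd_trans skew_eval_eq_0_iff by blast
    then have "e' = e" by (rule unique_root)
    then have "\<not> right_coprime D P'"
      using not_right_coprime_common_root De' root D(2) skew_eval_eq_0_iff by blast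
    with \<open>min_degree (left_combinations D P') \<le> _\<close> coprime show False
      unfolding right_coprime_def by simp
  qed
qed

lemma P_indep_insert_xminus_factor_iff:
  assumes \<Omega>: "finite \<Omega>" "0 \<notin> \<Omega>" and P': "P' \<noteq> 0" and P: "P = xminus c \<star> P'"
    and unique_root: "\<And>b. ev P b = 0 \<Longrightarrow> b = e" and root: "ev P' e = 0"
    and not_root: "\<forall>Q\<in>\<Omega>. ev Q e \<noteq> 0"
  shows "P_indep \<sigma> \<delta> (insert P \<Omega>) \<longleftrightarrow> P_indep \<sigma> \<delta> (insert P' \<Omega>)"
proof -
  have "ev P e = 0"
    using root P rdvd_skew_mult skew_eval_eq_0_iff by blast
  then have notin: "P \<notin> \<Omega>" "P' \<notin> \<Omega>" using root not_root by auto
  have P0: "P \<noteq> 0" using P P' by simp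
  note I = I_ideal_nonzero_min_degree_le[OF \<Omega>]
  show ?thesis
    unfolding P_indep_insert_iff[OF \<Omega> P0 notin(1)] P_indep_insert_iff[OF \<Omega> P' notin(2)]
    using right_coprime_xminus_factor_iff[OF F_gen_generates(1)[OF I(1)] P' P unique_root root] by blast
qed

abbreviation Pseq :: "'a list \<Rightarrow> 'a poly" where "Pseq \<equiv> P_seq \<sigma> \<delta>"

lemma P_seq_snoc: "Pseq (xs @ [c]) = xminus c \<star> Pseq xs"
  by (simp add: P_seq_def)

lemma P_seq_single: "Pseq [a] = xminus a"
  by (simp add: P_seq_def)

lemma P_seq_nonzero: "Pseq xs \<noteq> 0"
  by (induction xs rule: rev_induct) (simp_all add: P_seq_def)

lemma rdvd_P_seq_hd: "xs \<noteq> [] \<Longrightarrow> rdvd (xminus (hd xs)) (Pseq xs)"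
proof (induction xs rule: rev_induct)
  case (snoc c xs)
  then show ?case
    by (cases "xs = []") (auto simp: P_seq_single P_seq_snoc intro: rdvd_skew_mult rdvd_refl)
qed simp

lemma mult_seq_root_iff: "mult_seq \<sigma> \<delta> xs \<Longrightarrow> ev (Pseq xs) b = 0 \<longleftrightarrow> b = hd xs"
  unfolding mult_seq_def by blast

lemma mult_seq_butlast:
  assumes m: "mult_seq \<sigma> \<delta> xs" and l: "length xs \<ge> 2"
  shows "mult_seq \<sigma> \<delta> (butlast xs)" and "hd (butlast xs) = hd xs"
    and "Pseq xs = xminus (last xs) \<star> Pseq (butlast xs)"
proof -
  obtain a b ys where xs: "xs = a # b # ys" using l by (cases xs; cases "tl xs") auto
  have "Pseq xs = Pseq (butlast xs @ [last xs])" using xs by simp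
  also have "\<dots> = xminus (last xs) \<star> Pseq (butlast xs)" by (rule P_seq_snoc)
  finally show P: "Pseq xs = xminus (last xs) \<star> Pseq (butlast xs)" .
  show hd: "hd (butlast xs) = hd xs" by (simp add: xs)
  have "ev (Pseq (butlast xs)) c = 0 \<longleftrightarrow> c = hd xs" for c
  proof
    assume "ev (Pseq (butlast xs)) c = 0"
    then have "ev (Pseq xs) c = 0" by (simp add: P skew_eval_skew_mult)
    then show "c = hd xs" using mult_seq_root_iff[OF m] by simp
  next
    assume "c = hd xs"
    then show "ev (Pseq (butlast xs)) c = 0"
      using rdvd_P_seq_hd[of "butlast xs"] hd xs skew_eval_eq_0_iff by simp
  qed
  then show "mult_seq \<sigma> \<delta> (butlast xs)" unfolding mult_seq_def using hd xs by auto
qed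

lemma P_indep_P_seq_butlast_iff:
  assumes fin: "finite S" and ms: "\<forall>i\<in>S. mult_seq \<sigma> \<delta> (as i)"
    and inj: "inj_on (\<lambda>i. hd (as i)) S" and k: "k \<in> S" "length (as k) \<ge> 2"
  shows "P_indep \<sigma> \<delta> ((\<lambda>i. Pseq (as i)) ` S)
    \<longleftrightarrow> P_indep \<sigma> \<delta> ((\<lambda>i. Pseq ((as(k := butlast (as k))) i)) ` S)"
proof -
  note butlast = mult_seq_butlast[OF bspec[OF ms k(1)] k(2)]
  define \<Omega> where "\<Omega> = (\<lambda>i. Pseq (as i)) ` (S - {k})"
  have not_root: "\<forall>Q\<in>\<Omega>. ev Q (hd (as k)) \<noteq> 0"
  proof
    fix Q assume "Q \<in> \<Omega>"
    then obtain i where i: "i \<in> S" "i \<noteq> k" "Q = Pseq (as i)" by (auto simp: \<Omega>_def)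
    then have "hd (as k) \<noteq> hd (as i)" using inj k(1) unfolding inj_on_def by blast
    then show "ev Q (hd (as k)) \<noteq> 0" using mult_seq_root_iff[OF bspec[OF ms i(1)]] i(3) by simp
  qed
  have "(\<lambda>i. Pseq (as i)) ` S = insert (Pseq (as k)) \<Omega>"
    and "(\<lambda>i. Pseq ((as(k := butlast (as k))) i)) ` S = insert (Pseq (butlast (as k))) \<Omega>"
    using k(1) by (auto simp: \<Omega>_def)
  moreover have "P_indep \<sigma> \<delta> (insert (Pseq (as k)) \<Omega>)
      \<longleftrightarrow> P_indep \<sigma> \<delta> (insert (Pseq (butlast (as k))) \<Omega>)"
  proof (rule P_indep_insert_xminus_factor_iff)
    show "finite \<Omega>" "0 \<notin> \<Omega>" using fin P_seq_nonzero by (auto simp: \<Omega>_def)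
    show "ev (Pseq (butlast (as k))) (hd (as k)) = 0"
      using mult_seq_root_iff[OF butlast(1)] butlast(2) by simp
    show "\<And>b. ev (Pseq (as k)) b = 0 \<Longrightarrow> b = hd (as k)"
      using mult_seq_root_iff[OF bspec[OF ms k(1)]] by simp
  qed (use P_seq_nonzero butlast(3) not_root in simp_all)
  ultimately show ?thesis by simp
qed

text \<open>Induction on the total length: each step strips the last linear factor of one
  P_seq, which does not affect P-independence.\<close>
lemma P_indep_P_seq_iff:
  assumes "finite S" "\<forall>i\<in>S. mult_seq \<sigma> \<delta> (as i)" "inj_on (\<lambda>i. hd (as i)) S"
  shows "P_indep \<sigma> \<delta> ((\<lambda>i. Pseq (as i)) ` S) \<longleftrightarrow> P_indep \<sigma> \<delta> (xminus ` (\<lambda>i. hd (as i)) ` S)"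
  using assms
proof (induction "\<Sum>i\<in>S. length (as i)" arbitrary: as rule: less_induct)
  case less
  note fin = less.prems(1) and ms = less.prems(2) and inj = less.prems(3)
  have ne: "as i \<noteq> []" if "i \<in> S" for i using ms that unfolding mult_seq_def by blast
  show ?case
  proof (cases "\<forall>i\<in>S. length (as i) = 1")
    case True
    then have "Pseq (as i) = xminus (hd (as i))" if "i \<in> S" for i
      using ne[OF that] that by (cases "as i") (auto simp: P_seq_single)
    then have "(\<lambda>i. Pseq (as i)) ` S = xminus ` (\<lambda>i. hd (as i)) ` S"
      unfolding image_image by (intro image_cong) auto
    then show ?thesis by simp
  next
    case False
    then obtain k where k: "k \<in> S" "length (as k) \<noteq> 1" by blast
    then have l2: "length (as k) \<ge> 2" using ne[OF k(1)] by (cases "as k") (auto simp: Suc_le_eq)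
    note butlast = mult_seq_butlast[OF bspec[OF ms k(1)] l2]
    define as' where "as' = as(k := butlast (as k))"
    have hd': "hd (as' i) = hd (as i)" for i using butlast(2) by (simp add: as'_def)
    have "(\<Sum>i\<in>S. length (as' i)) < (\<Sum>i\<in>S. length (as i))"
      by (rule sum_strict_mono_ex1[OF fin]) (use k l2 in \<open>auto simp: as'_def\<close>)
    moreover have "\<forall>i\<in>S. mult_seq \<sigma> \<delta> (as' i)" using ms butlast(1) by (auto simp: as'_def)
    moreover have "inj_on (\<lambda>i. hd (as' i)) S" using inj by (simp add: hd')
    ultimately have "P_indep \<sigma> \<delta> ((\<lambda>i. Pseq (as' i)) ` S)
        \<longleftrightarrow> P_indep \<sigma> \<delta> (xminus ` (\<lambda>i. hd (as i)) ` S)"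
      using less(1)[of as', OF _ fin] by (simp add: hd')
    then show ?thesis
      using P_indep_P_seq_butlast_iff[OF fin ms inj k(1) l2] by (simp add: as'_def)
  qed
qed

section \<open>Conjugacy classes\<close>

lemma skew_conj_skew_conj:
  assumes b: "\<beta> \<noteq> 0" and g: "\<gamma> \<noteq> 0"
  shows "cj (cj a \<gamma>) \<beta> = cj a (\<beta> * \<gamma>)"
proof -
  have "cj (cj a \<gamma>) \<beta> * (\<beta> * \<gamma>) = (\<sigma> \<beta> * cj a \<gamma> + \<delta> \<beta>) * \<gamma>"
    using skew_conj_mult[OF b, of "cj (cj a \<gamma>) \<beta>" "cj a \<gamma>"]
    by (simp flip: mult.assoc)
  also have "\<dots> = \<sigma> \<beta> * (\<sigma> \<gamma> * a + \<delta> \<gamma>) + \<delta> \<beta> * \<gamma>"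
    using skew_conj_mult[OF g, of "cj a \<gamma>" a] by (simp add: distrib_right mult.assoc)
  also have "\<dots> = \<sigma> (\<beta> * \<gamma>) * a + \<delta> (\<beta> * \<gamma>)"
    by (simp add: sigma_mult delta_mult distrib_left mult.assoc add.assoc)
  finally show ?thesis using skew_conj_mult b g by simp
qed

lemma skew_conj_1 [simp]: "cj a 1 = a"
  by (simp add: skew_conj_def)

lemma skew_conj_cancel: "\<beta> \<noteq> 0 \<Longrightarrow> cj b \<beta> = cj b' \<beta> \<Longrightarrow> b = b'"
  using skew_conj_mult[of \<beta> "cj b \<beta>" b] skew_conj_mult[of \<beta> "cj b \<beta>" b'] by simp

lemma skew_conjugateI:
  assumes "\<gamma> \<noteq> 0" "\<beta> \<noteq> 0" "cj b \<gamma> = cj a \<beta>"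
  shows "skew_conjugate \<sigma> \<delta> a b"
proof -
  have "cj a (inverse \<gamma> * \<beta>) = cj (cj b \<gamma>) (inverse \<gamma>)"
    using skew_conj_skew_conj[of "inverse \<gamma>" \<beta> a] assms by simp
  also have "\<dots> = b" using skew_conj_skew_conj[of "inverse \<gamma>" \<gamma> b] assms by simp
  finally show ?thesis unfolding skew_conjugate_def using assms by (metis no_zero_divisors inverse_nonzero_iff_nonzero)
qed

abbreviation K :: "'a \<Rightarrow> 'a set" where "K \<equiv> centralizer \<sigma> \<delta>"

lemma centralizer_iff_skew_conj: "c \<noteq> 0 \<Longrightarrow> c \<in> K a \<longleftrightarrow> cj a c = a"
  using skew_conj_mult[of c a a] by (auto simp: centralizer_def)

lemma centralizer_0: "0 \<in> K a"
  by (simp add: centralizer_def)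

lemma centralizer_1: "1 \<in> K a"
  by (simp add: centralizer_def)

lemma centralizer_minus:
  assumes "c \<in> K a"
  shows "- c \<in> K a"
proof -
  have "\<sigma> (- c) * a + \<delta> (- c) = - (\<sigma> c * a + \<delta> c)" by (simp add: sigma_minus delta_minus)
  with assms show ?thesis by (simp add: centralizer_def)
qed

text \<open>The map beta |-> F(a^beta) beta of the paper, written so that it is also defined at 0.\<close>
definition conj_eval :: "'a poly \<Rightarrow> 'a \<Rightarrow> 'a \<Rightarrow> 'a" where
  "conj_eval F a \<beta> = ev (F \<star> [:\<beta>:]) a"

lemma conj_eval_nonzero: "\<beta> \<noteq> 0 \<Longrightarrow> conj_eval F a \<beta> = ev F (cj a \<beta>) * \<beta>"
  unfolding conj_eval_def by (simp add: skew_eval_skew_mult)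

lemma conj_eval_0 [simp]: "conj_eval F a 0 = 0"
  by (simp add: conj_eval_def)

lemma conj_eval_add: "conj_eval F a (\<beta> + \<gamma>) = conj_eval F a \<beta> + conj_eval F a \<gamma>"
  unfolding conj_eval_def using skew_mult_add_right[of F "[:\<beta>:]" "[:\<gamma>:]"]
  by (simp add: skew_eval_add)

lemma conj_eval_mult_centralizer:
  assumes "c \<in> K a"
  shows "conj_eval F a (\<beta> * c) = conj_eval F a \<beta> * c"
proof (cases "c = 0")
  case False
  have "conj_eval F a (\<beta> * c) = ev ((F \<star> [:\<beta>:]) \<star> [:c:]) a"
    by (simp add: conj_eval_def skew_mult_assoc)
  also have "\<dots> = conj_eval F a \<beta> * c"
    using False assms centralizer_iff_skew_conj[OF False]
    by (simp add: skew_eval_skew_mult conj_eval_def)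
  finally show ?thesis .
qed (simp add: conj_eval_def)

lemma conj_eval_sum:
  "(\<forall>j<(m::nat). c j \<in> K a) \<Longrightarrow> conj_eval F a (\<Sum>j<m. \<beta> j * c j) = (\<Sum>j<m. conj_eval F a (\<beta> j) * c j)"
  by (induction m) (auto simp: conj_eval_add conj_eval_mult_centralizer)

lemma conj_eval_skew_mult_eq_0:
  assumes "conj_eval (G \<star> H) a \<gamma> = 0"
  shows "conj_eval G a (conj_eval H a \<gamma>) = 0"
  using assms unfolding conj_eval_def
  by (simp add: skew_mult_assoc skew_eval_skew_mult split: if_splits)

lemma conj_eval_xminus: "\<gamma> \<noteq> 0 \<Longrightarrow> conj_eval (xminus e) a \<gamma> = (cj a \<gamma> - e) * \<gamma>"
  by (simp add: conj_eval_nonzero skew_eval_xminus)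

lemma right_lin_indep_nonzero:
  assumes "right_lin_indep (K a) \<beta> m" "j < m"
  shows "\<beta> j \<noteq> 0"
proof
  assume "\<beta> j = 0"
  define c where "c i = (if i = j then (1::'a) else 0)" for i :: nat
  have "\<forall>i<m. c i \<in> K a" by (simp add: c_def centralizer_0 centralizer_1)
  moreover have "(\<Sum>i<m. \<beta> i * c i) = 0"
    using \<open>\<beta> j = 0\<close> by (intro sum.neutral) (simp add: c_def)
  ultimately have "c j = 0" using assms unfolding right_lin_indep_def by blast
  then show False by (simp add: c_def)
qed

lemma right_lin_indep_conj_eval_nonconj:
  assumes ind: "right_lin_indep (K b) \<beta> m" and nonconj: "\<not> skew_conjugate \<sigma> \<delta> a b"
    and "\<gamma> \<noteq> 0"
  shows "right_lin_indep (K b) (\<lambda>j. conj_eval (xminus (cj a \<gamma>)) b (\<beta> j)) m"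
  unfolding right_lin_indep_def
proof (rule allI, intro impI)
  fix c assume cK: "\<forall>j<m. c j \<in> K b"
    and "(\<Sum>j<m. conj_eval (xminus (cj a \<gamma>)) b (\<beta> j) * c j) = 0"
  then have zero: "conj_eval (xminus (cj a \<gamma>)) b (\<Sum>j<m. \<beta> j * c j) = 0"
    by (simp add: conj_eval_sum)
  have "(\<Sum>j<m. \<beta> j * c j) = 0"
  proof (rule ccontr)
    assume nz: "(\<Sum>j<m. \<beta> j * c j) \<noteq> 0"
    with zero have "cj b (\<Sum>j<m. \<beta> j * c j) = cj a \<gamma>" by (simp add: conj_eval_xminus)
    with nz \<open>\<gamma> \<noteq> 0\<close> nonconj show False by (blast intro: skew_conjugateI)
  qed
  with ind cK show "\<forall>j<m. c j = 0" unfolding right_lin_indep_def by blast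
qed

text \<open>The kernel of beta |-> (b^beta - b^beta0) beta is beta0 K_b, so dropping beta0 suffices.\<close>
lemma right_lin_indep_conj_eval_tail:
  assumes ind: "right_lin_indep (K b) \<beta> (Suc m)"
  shows "right_lin_indep (K b) (\<lambda>j. conj_eval (xminus (cj b (\<beta> 0))) b (\<beta> (Suc j))) m"
  unfolding right_lin_indep_def
proof (rule allI, intro impI)
  fix c assume cK: "\<forall>j<m. c j \<in> K b"
    and "(\<Sum>j<m. conj_eval (xminus (cj b (\<beta> 0))) b (\<beta> (Suc j)) * c j) = 0"
  then have zero: "conj_eval (xminus (cj b (\<beta> 0))) b \<gamma> = 0" if "\<gamma> = (\<Sum>j<m. \<beta> (Suc j) * c j)" for \<gamma>
    using that by (simp add: conj_eval_sum)
  define \<gamma> where "\<gamma> = (\<Sum>j<m. \<beta> (Suc j) * c j)"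
  have b0: "\<beta> 0 \<noteq> 0" using right_lin_indep_nonzero[OF ind] by simp
  define t where "t = inverse (\<beta> 0) * \<gamma>"
  have \<gamma>t: "\<gamma> = \<beta> 0 * t" using b0 by (simp add: t_def flip: mult.assoc)
  have tK: "t \<in> K b"
  proof (cases "t = 0")
    case False
    then have "\<gamma> \<noteq> 0" using b0 \<gamma>t by simp
    with zero[OF \<gamma>_def] have "cj b \<gamma> = cj b (\<beta> 0)" by (simp add: conj_eval_xminus)
    then have "cj (cj b t) (\<beta> 0) = cj b (\<beta> 0)" using skew_conj_skew_conj[OF b0 False] \<gamma>t by simp
    then show ?thesis using skew_conj_cancel[OF b0] centralizer_iff_skew_conj[OF False] by blast
  qed (simp add: centralizer_0)
  define c' where "c' j = (if j = 0 then - t else c (j - 1))" for j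
  have "\<forall>j<Suc m. c' j \<in> K b" using cK tK centralizer_minus by (auto simp: c'_def)
  moreover have "(\<Sum>j<Suc m. \<beta> j * c' j) = 0"
    by (subst sum.lessThan_Suc_shift) (simp add: c'_def \<gamma>t flip: \<gamma>_def)
  ultimately have "\<forall>j<Suc m. c' j = 0" using ind unfolding right_lin_indep_def by blast
  then show "\<forall>j<m. c j = 0" by (auto simp: c'_def)
qed

lemma vanishing_on_classes_step:
  fixes m :: "nat \<Rightarrow> nat" and \<beta> :: "nat \<Rightarrow> nat \<Rightarrow> 'a"
  assumes F: "F \<noteq> 0"
    and nonconj: "\<forall>i<l. \<forall>j<l. i \<noteq> j \<longrightarrow> \<not> skew_conjugate \<sigma> \<delta> (a i) (a j)"
    and ind: "\<forall>i<l. right_lin_indep (K (a i)) (\<beta> i) (m i)"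
    and van: "\<forall>i<l. \<forall>j<m i. conj_eval F (a i) (\<beta> i j) = 0"
    and i0: "i0 < l" "m i0 > 0"
  obtains G \<beta>' where "F = G \<star> xminus (cj (a i0) (\<beta> i0 0))"
    and "\<forall>i<l. right_lin_indep (K (a i)) (\<beta>' i) ((m(i0 := m i0 - 1)) i)"
    and "\<forall>i<l. \<forall>j<(m(i0 := m i0 - 1)) i. conj_eval G (a i) (\<beta>' i j) = 0"
proof -
  define e where "e = cj (a i0) (\<beta> i0 0)"
  define m' where "m' = m(i0 := m i0 - 1)"
  define \<beta>' where "\<beta>' = (\<lambda>i j. conj_eval (xminus e) (a i) (\<beta> i (if i = i0 then Suc j else j)))"
  have b0: "\<beta> i0 0 \<noteq> 0" using right_lin_indep_nonzero ind i0 by blast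
  have "conj_eval F (a i0) (\<beta> i0 0) = 0" using van i0 by blast
  then have "ev F e = 0" using conj_eval_nonzero[OF b0] b0 by (simp add: e_def)
  then obtain G where G: "F = G \<star> xminus e" using skew_eval_eq_0_iff unfolding right_dvd_def by blast
  have ind': "\<forall>i<l. right_lin_indep (K (a i)) (\<beta>' i) (m' i)"
  proof (intro allI impI)
    fix i assume i: "i < l"
    show "right_lin_indep (K (a i)) (\<beta>' i) (m' i)"
    proof (cases "i = i0")
      case True
      with ind i i0(2) have "right_lin_indep (K (a i)) (\<beta> i) (Suc (m' i))" by (simp add: m'_def)
      from right_lin_indep_conj_eval_tail[OF this] show ?thesis
        using True by (simp add: \<beta>'_def e_def)
    next
      case False
      with nonconj i i0(1) have "\<not> skew_conjugate \<sigma> \<delta> (a i0) (a i)" by blast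
      from right_lin_indep_conj_eval_nonconj[OF _ this b0] show ?thesis
        using ind i False by (simp add: \<beta>'_def e_def m'_def)
    qed
  qed
  have van': "\<forall>i<l. \<forall>j<m' i. conj_eval G (a i) (\<beta>' i j) = 0"
  proof (intro allI impI)
    fix i j assume "i < l" "j < m' i"
    then have "conj_eval (G \<star> xminus e) (a i) (\<beta> i (if i = i0 then Suc j else j)) = 0"
      using van G by (auto simp: m'_def split: if_splits)
    then show "conj_eval G (a i) (\<beta>' i j) = 0"
      unfolding \<beta>'_def by (rule conj_eval_skew_mult_eq_0)
  qed
  show ?thesis using that[of G \<beta>'] G ind' van' by (simp add: e_def m'_def)
qed

lemma sum_le_degree_if_vanishing_on_classes:
  fixes m :: "nat \<Rightarrow> nat" and \<beta> :: "nat \<Rightarrow> nat \<Rightarrow> 'a"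
  assumes "F \<noteq> 0"
    and "\<forall>i<l. \<forall>j<l. i \<noteq> j \<longrightarrow> \<not> skew_conjugate \<sigma> \<delta> (a i) (a j)"
    and "\<forall>i<l. right_lin_indep (K (a i)) (\<beta> i) (m i)"
    and "\<forall>i<l. \<forall>j<m i. conj_eval F (a i) (\<beta> i j) = 0"
  shows "(\<Sum>i<l. m i) \<le> degree F"
  using assms
proof (induction "\<Sum>i<l. m i" arbitrary: F m \<beta>)
  case (Suc n)
  then obtain i0 where i0: "i0 < l" "m i0 > 0"
    by (metis gr0I lessThan_iff sum.neutral nat.distinct(1))
  obtain G \<beta>' where G: "F = G \<star> xminus (cj (a i0) (\<beta> i0 0))"
    and ind: "\<forall>i<l. right_lin_indep (K (a i)) (\<beta>' i) ((m(i0 := m i0 - 1)) i)"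
    and van: "\<forall>i<l. \<forall>j<(m(i0 := m i0 - 1)) i. conj_eval G (a i) (\<beta>' i j) = 0"
    using vanishing_on_classes_step[OF Suc.prems i0] by blast
  have "(\<Sum>i<l. m i) = m i0 + (\<Sum>i\<in>{..<l} - {i0}. m i)"
    using i0 by (simp add: sum.remove)
  moreover have "(\<Sum>i<l. (m(i0 := m i0 - 1)) i) = (m i0 - 1) + (\<Sum>i\<in>{..<l} - {i0}. m i)"
  proof -
    have "(\<Sum>i\<in>{..<l} - {i0}. (m(i0 := m i0 - 1)) i) = (\<Sum>i\<in>{..<l} - {i0}. m i)"
      by (rule sum.cong) auto
    then show ?thesis using i0 sum.remove[of "{..<l}" i0 "m(i0 := m i0 - 1)"] by simp
  qed
  ultimately have sum: "(\<Sum>i<l. m i) = Suc (\<Sum>i<l. (m(i0 := m i0 - 1)) i)"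
    using i0 by simp
  have "G \<noteq> 0" using G Suc.prems(1) by auto
  with Suc.hyps(1)[of "m(i0 := m i0 - 1)"] Suc.hyps(2) Suc.prems(2) ind van
  have "(\<Sum>i<l. (m(i0 := m i0 - 1)) i) \<le> degree G" unfolding sum by simp
  then show ?case using G \<open>G \<noteq> 0\<close> sum degree_skew_mult(1)[of G "xminus _"] by simp
qed simp

lemma inj_xminus: "inj xminus"
  by (rule injI) (simp add: xminus_def)

lemma sum_degree_xminus: "(\<Sum>P\<in>xminus ` \<Psi>. degree P) = card \<Psi>"
  by (simp add: sum.reindex[OF inj_on_subset[OF inj_xminus]])

lemma zero_notin_xminus_image [simp]: "0 \<notin> xminus ` \<Psi>"
  using xminus_nonzero by (metis image_iff)

lemma P_indep_elems_iff_min_degree: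
  assumes "finite \<Psi>"
  shows "P_indep_elems \<sigma> \<delta> \<Psi> \<longleftrightarrow> min_degree (I_ideal \<sigma> \<delta> (xminus ` \<Psi>)) = card \<Psi>"
  using P_indep_iff_min_degree[of "xminus ` \<Psi>"] assms
  by (auto simp: P_indep_elems_def sum_degree_xminus)

lemma I_ideal_xminus_root: "F \<in> I_ideal \<sigma> \<delta> (xminus ` \<Psi>) \<Longrightarrow> b \<in> \<Psi> \<Longrightarrow> ev F b = 0"
  unfolding I_ideal_def skew_eval_eq_0_iff by blast

lemma P_indep_elems_separating:
  assumes "P_indep_elems \<sigma> \<delta> \<Psi>" "b \<in> \<Psi>"
  obtains G where "\<forall>c\<in>\<Psi> - {b}. ev G c = 0" "ev G b \<noteq> 0"
proof -
  define \<Omega> where "\<Omega> = xminus ` (\<Psi> - {b})"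
  have fin: "finite \<Omega>" "0 \<notin> \<Omega>" using assms(1) by (simp_all add: \<Omega>_def P_indep_elems_def)
  have "xminus b \<notin> \<Omega>" using inj_xminus unfolding \<Omega>_def inj_def by auto
  moreover have "xminus ` \<Psi> = insert (xminus b) \<Omega>" using assms(2) by (auto simp: \<Omega>_def)
  ultimately have coprime: "right_coprime (F_gen \<sigma> \<delta> \<Omega>) (xminus b)"
    using assms(1) P_indep_insert_iff[OF fin] by (simp add: P_indep_elems_def)
  note I = I_ideal_nonzero_min_degree_le[OF fin]
  have G: "F_gen \<sigma> \<delta> \<Omega> \<in> I_ideal \<sigma> \<delta> \<Omega>" using F_gen_generates(3)[OF I(1)] rdvd_refl by blast
  show ?thesis
  proof
    show "\<forall>c\<in>\<Psi> - {b}. ev (F_gen \<sigma> \<delta> \<Omega>) c = 0"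
      using G I_ideal_xminus_root unfolding \<Omega>_def by blast
    show "ev (F_gen \<sigma> \<delta> \<Omega>) b \<noteq> 0"
      using coprime not_right_coprime_common_root[OF _ rdvd_refl F_gen_generates(1)[OF I(1)]]
      by (auto simp: skew_eval_eq_0_iff)
  qed
qed

lemma right_lin_indep_if_separated:
  assumes nonzero: "\<forall>j<m. \<beta> j \<noteq> 0"
    and separated: "\<forall>j0<m. \<exists>G. (\<forall>j<m. j \<noteq> j0 \<longrightarrow> ev G (cj a (\<beta> j)) = 0) \<and> ev G (cj a (\<beta> j0)) \<noteq> 0"
  shows "right_lin_indep (K a) \<beta> m"
  unfolding right_lin_indep_def
proof (rule allI, intro impI allI)
  fix c j0 assume cK: "\<forall>j<m. c j \<in> K a" and sum: "(\<Sum>j<m. \<beta> j * c j) = 0" and "j0 < m"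
  then obtain G where G: "\<forall>j<m. j \<noteq> j0 \<longrightarrow> ev G (cj a (\<beta> j)) = 0" "ev G (cj a (\<beta> j0)) \<noteq> 0"
    using separated by blast
  have "0 = (\<Sum>j<m. conj_eval G a (\<beta> j) * c j)"
    using conj_eval_sum[OF cK, of G \<beta>] sum by simp
  also have "\<dots> = (\<Sum>j<m. if j = j0 then conj_eval G a (\<beta> j0) * c j0 else 0)"
    using G(1) nonzero by (intro sum.cong) (auto simp: conj_eval_nonzero)
  also have "\<dots> = ev G (cj a (\<beta> j0)) * \<beta> j0 * c j0"
    using \<open>j0 < m\<close> nonzero by (simp add: conj_eval_nonzero)
  finally show "c j0 = 0" using G(2) nonzero \<open>j0 < m\<close> by simp
qed

lemma right_lin_indep_if_P_indep_elems:
  assumes indep: "P_indep_elems \<sigma> \<delta> \<Psi>" and nonzero: "\<forall>j<m. \<beta> j \<noteq> 0"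
    and conj_in: "\<forall>j<m. cj a (\<beta> j) \<in> \<Psi>" and inj: "inj_on (\<lambda>j. cj a (\<beta> j)) {..<m}"
  shows "right_lin_indep (K a) \<beta> m"
proof (rule right_lin_indep_if_separated[OF nonzero], intro allI impI)
  fix j0 assume j0: "j0 < m"
  then obtain G where G: "\<forall>c\<in>\<Psi> - {cj a (\<beta> j0)}. ev G c = 0" "ev G (cj a (\<beta> j0)) \<noteq> 0"
    using P_indep_elems_separating[OF indep] conj_in by blast
  have "cj a (\<beta> j) \<in> \<Psi> - {cj a (\<beta> j0)}" if "j < m" "j \<noteq> j0" for j
    using that j0 conj_in inj unfolding inj_on_def by blast
  with G show "\<exists>G. (\<forall>j<m. j \<noteq> j0 \<longrightarrow> ev G (cj a (\<beta> j)) = 0) \<and> ev G (cj a (\<beta> j0)) \<noteq> 0"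
    by blast
qed

lemma P_indep_elems_if_right_lin_indep:
  fixes m :: "nat \<Rightarrow> nat" and \<beta> :: "nat \<Rightarrow> nat \<Rightarrow> 'a"
  assumes nonconj: "\<forall>i<l. \<forall>j<l. i \<noteq> j \<longrightarrow> \<not> skew_conjugate \<sigma> \<delta> (a i) (a j)"
    and nonzero: "\<forall>i<l. \<forall>j<m i. \<beta> i j \<noteq> 0"
    and indep: "\<forall>i<l. right_lin_indep (K (a i)) (\<beta> i) (m i)"
    and \<Psi>: "\<Psi> = (\<lambda>(i, j). cj (a i) (\<beta> i j)) ` (SIGMA i:{..<l}. {..<m i})"
    and card: "card \<Psi> = (\<Sum>i<l. m i)"
  shows "P_indep_elems \<sigma> \<delta> \<Psi>"
proof -
  have fin: "finite \<Psi>" by (simp add: \<Psi>)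
  note ideal = I_ideal_nonzero_min_degree_le[OF finite_imageI[OF fin] zero_notin_xminus_image]
  define F where "F = F_gen \<sigma> \<delta> (xminus ` \<Psi>)"
  have F: "F \<noteq> 0" "degree F = min_degree (I_ideal \<sigma> \<delta> (xminus ` \<Psi>))"
    using F_gen_generates(1,2)[OF ideal(1)] by (simp_all add: F_def)
  have "F \<in> I_ideal \<sigma> \<delta> (xminus ` \<Psi>)"
    using F_gen_generates(3)[OF ideal(1)] rdvd_refl by (simp add: F_def)
  then have "\<forall>i<l. \<forall>j<m i. conj_eval F (a i) (\<beta> i j) = 0"
    using I_ideal_xminus_root nonzero by (force simp: \<Psi> conj_eval_nonzero)
  then have "(\<Sum>i<l. m i) \<le> degree F"
    using sum_le_degree_if_vanishing_on_classes[OF F(1) nonconj indep] by blast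
  moreover have "min_degree (I_ideal \<sigma> \<delta> (xminus ` \<Psi>)) \<le> card \<Psi>"
    using ideal(2) by (simp add: sum_degree_xminus)
  ultimately show ?thesis
    using P_indep_elems_iff_min_degree[OF fin] F(2) card by simp
qed

lemma P_indep_elems_conjugates_iff:
  fixes l :: nat and m :: "nat \<Rightarrow> nat" and \<beta> :: "nat \<Rightarrow> nat \<Rightarrow> 'a"
  defines "I \<equiv> SIGMA i:{..<l}. {..<m i}"
  assumes nonconj: "\<forall>i<l. \<forall>j<l. i \<noteq> j \<longrightarrow> \<not> skew_conjugate \<sigma> \<delta> (a i) (a j)"
    and nonzero: "\<forall>i<l. \<forall>j<m i. \<beta> i j \<noteq> 0"
    and inj: "inj_on (\<lambda>(i, j). cj (a i) (\<beta> i j)) I"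
  shows "P_indep_elems \<sigma> \<delta> ((\<lambda>(i, j). cj (a i) (\<beta> i j)) ` I)
    \<longleftrightarrow> (\<forall>i<l. right_lin_indep (K (a i)) (\<beta> i) (m i))"
proof
  assume "P_indep_elems \<sigma> \<delta> ((\<lambda>(i, j). cj (a i) (\<beta> i j)) ` I)"
  moreover have "inj_on (\<lambda>j. cj (a i) (\<beta> i j)) {..<m i}" if "i < l" for i
  proof (rule inj_onI)
    fix j j' assume "j \<in> {..<m i}" "j' \<in> {..<m i}" "cj (a i) (\<beta> i j) = cj (a i) (\<beta> i j')"
    then have "(i, j) = (i, j')" using inj_onD[OF inj, of "(i, j)" "(i, j')"] that by (simp add: I_def)
    then show "j = j'" by simp
  qed
  ultimately show "\<forall>i<l. right_lin_indep (K (a i)) (\<beta> i) (m i)"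
    using nonzero by (auto intro!: right_lin_indep_if_P_indep_elems simp: I_def)
next
  assume "\<forall>i<l. right_lin_indep (K (a i)) (\<beta> i) (m i)"
  moreover have "card ((\<lambda>(i, j). cj (a i) (\<beta> i j)) ` I) = (\<Sum>i<l. m i)"
    using card_image[OF inj] by (simp add: I_def card_SigmaI)
  ultimately show "P_indep_elems \<sigma> \<delta> ((\<lambda>(i, j). cj (a i) (\<beta> i j)) ` I)"
    using P_indep_elems_if_right_lin_indep[OF nonconj nonzero] unfolding I_def by blast
qed

end

theorem mainTheorem10:
  fixes \<sigma> \<delta> :: "'a::division_ring \<Rightarrow> 'a"
    and n l :: nat and as :: "nat \<Rightarrow> 'a list"
    and a :: "nat \<Rightarrow> 'a" and m :: "nat \<Rightarrow> nat" and \<beta> :: "nat \<Rightarrow> nat \<Rightarrow> 'a"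
  assumes endo: "is_ring_endo \<sigma>"
    and der: "is_sigma_derivation \<sigma> \<delta>"
    and mseq: "\<forall>i<n. mult_seq \<sigma> \<delta> (as i)"
    and dist: "inj_on (\<lambda>i. hd (as i)) {..<n}"
    and nonconj: "\<forall>i<l. \<forall>j<l. i \<noteq> j \<longrightarrow> \<not> skew_conjugate \<sigma> \<delta> (a i) (a j)"
    and mpos: "\<forall>i<l. m i > 0"
    and bnz: "\<forall>i<l. \<forall>j<m i. \<beta> i j \<noteq> 0"
    and nsum: "n = (\<Sum>i<l. m i)"
    and cover: "(\<lambda>i. hd (as i)) ` {..<n} = (\<Union>i<l. (\<lambda>j. skew_conj \<sigma> \<delta> (a i) (\<beta> i j)) ` {..<m i})"
  shows "(P_indep \<sigma> \<delta> ((\<lambda>i. P_seq \<sigma> \<delta> (as i)) ` {..<n})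
            \<longleftrightarrow> P_indep_elems \<sigma> \<delta> ((\<lambda>i. hd (as i)) ` {..<n}))
       \<and> (P_indep_elems \<sigma> \<delta> ((\<lambda>i. hd (as i)) ` {..<n})
            \<longleftrightarrow> (\<forall>i<l. right_lin_indep (centralizer \<sigma> \<delta> (a i)) (\<beta> i) (m i)))"
proof -
  interpret skew_poly \<sigma> \<delta> using endo der by unfold_locales
  let ?I = "SIGMA i:{..<l}. {..<m i}" and ?conj = "\<lambda>(i, j). skew_conj \<sigma> \<delta> (a i) (\<beta> i j)"
  have \<Psi>: "(\<lambda>i. hd (as i)) ` {..<n} = ?conj ` ?I" unfolding cover by force
  have "card (?conj ` ?I) = card ?I"
    using card_image[OF dist] \<Psi> nsum by (simp add: card_SigmaI)
  then have "inj_on ?conj ?I" by (simp add: eq_card_imp_inj_on)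
  then have "P_indep_elems \<sigma> \<delta> ((\<lambda>i. hd (as i)) ` {..<n})
      \<longleftrightarrow> (\<forall>i<l. right_lin_indep (centralizer \<sigma> \<delta> (a i)) (\<beta> i) (m i))"
    unfolding \<Psi> using P_indep_elems_conjugates_iff[OF nonconj bnz] by blast
  moreover have "P_indep \<sigma> \<delta> ((\<lambda>i. P_seq \<sigma> \<delta> (as i)) ` {..<n})
      \<longleftrightarrow> P_indep_elems \<sigma> \<delta> ((\<lambda>i. hd (as i)) ` {..<n})"
    using P_indep_P_seq_iff[of "{..<n}" as] mseq dist by (simp add: P_indep_elems_def)
  ultimately show ?thesis by blast
qed

end
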